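(* Let $n\in\mathbb{N}$ and for $t\geq 1$ let $$f_n(t)=\sum_{j=0}^{n-1}\binom{n-1}{j}\left(\binom{n}{j+1}t^{2j+1}-\binom{n}{j}t^{2j}\right).$$ Then $f_n^{(i)}(t)\geq 0$ for all $t\geq 1$ and all $i=0,1,\dots,2n-1$.
   Context: $f_n^{(i)}$ denotes the $i$-th derivative of the polynomial $f_n$ (with $f_n^{(0)}=f_n$). *)

theory Defs
  imports "HOL-Computational_Algebra.Polynomial"
begin

definition f_poly :: "nat \<Rightarrow> real poly" where
  "f_poly n = (\<Sum>j=0..n-1. smult (of_nat ((n-1) choose j))
      (smult (of_nat (n choose (j+1))) (monom 1 (2*j+1))
       - smult (of_nat (n choose j)) (monom 1 (2*j))))"

end

theory Submission
  imports Defs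
begin

text \<open>
  The value f_n(t) is the coefficient of X^n in (1 + tX)^n (t + X)^(n-1) (1 - X).
  Writing 1 + tX = (t-1)X + (1+X) and t + X = (t-1) + (1+X) expands this coefficient as a
  polynomial in t - 1, whose coefficient pairs at (a,b) and (b,a) combine to a product of two
  nonnegative factors: a difference of binomial products, and a difference of consecutive
  binomial coefficients taken in the lower half of a row. So f_n has nonnegative coefficients
  in powers of t - 1, and therefore so has every derivative.
\<close>

lemma coeff_linear_poly_power':
  fixes a b :: "'a :: comm_semiring_1"
  shows "coeff ([:a, b:] ^ n) i = of_nat (n choose i) * b ^ i * a ^ (n - i)"
proof (cases "i \<le> n")
  case True
  then show ?thesis by (rule coeff_linear_poly_power)
next
  case False
  have "degree ([:a, b:] ^ n) \<le> n"
    using degree_power_le[of "[:a, b:]" n] degree_pCons_le[of a "[:b:]"] by (auto intro: order_trans)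
  then show ?thesis using False by (simp add: coeff_eq_0 binomial_eq_0)
qed

lemma coeff_linear_poly_power_reflect:
  fixes a :: "'a :: comm_semiring_1"
  assumes "i \<le> n"
  shows "coeff ([:a, 1:] ^ n) (n - i) = of_nat (n choose i) * a ^ i"
  using assms by (simp add: coeff_linear_poly_power' binomial_symmetric[symmetric])

lemma coeff_mult_1_minus_X:
  fixes p :: "'a :: comm_ring_1 poly"
  shows "coeff (p * [:1, -1:]) k = coeff p k - (if k = 0 then 0 else coeff p (k - 1))"
  by (cases k) (auto simp: algebra_simps coeff_pCons)

lemma poly_nonneg_of_coeff_nonneg:
  fixes p :: "real poly"
  assumes "\<And>k. coeff p k \<ge> 0" and "x \<ge> 0"
  shows "poly p x \<ge> 0"
  unfolding poly_altdef using assms by (intro sum_nonneg mult_nonneg_nonneg) auto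

lemma coeff_higher_pderiv_nonneg:
  fixes p :: "real poly"
  assumes "\<And>k. coeff p k \<ge> 0"
  shows "coeff ((pderiv ^^ i) p) k \<ge> 0"
  using assms
proof (induction i arbitrary: p k)
  case (Suc i)
  have "coeff (pderiv p) k \<ge> 0" for k
    using Suc.prems by (simp add: coeff_pderiv)
  then show ?case
    using Suc.IH[of "pderiv p"] by (simp add: funpow_Suc_right del: funpow.simps)
qed simp

lemma higher_pderiv_pcompose_shift:
  "(pderiv ^^ i) (pcompose p [:c, 1:]) = pcompose ((pderiv ^^ i) p) [:c, 1:]"
  by (induction i) (simp_all add: pderiv_pcompose pderiv_pCons)

lemma higher_pderiv_nonneg_of_shifted_coeff_nonneg:
  fixes p :: "real poly"
  assumes "\<And>k. coeff (pcompose p [:a, 1:]) k \<ge> 0" and "t \<ge> a"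
  shows "poly ((pderiv ^^ i) p) t \<ge> 0"
proof -
  have "poly ((pderiv ^^ i) p) t = poly ((pderiv ^^ i) (pcompose p [:a, 1:])) (t - a)"
    by (simp add: higher_pderiv_pcompose_shift poly_pcompose)
  also have "\<dots> \<ge> 0"
    using assms by (intro poly_nonneg_of_coeff_nonneg coeff_higher_pderiv_nonneg) auto
  finally show ?thesis .
qed

definition binom_diff :: "nat \<Rightarrow> nat \<Rightarrow> real" where
  "binom_diff N k = coeff ([:1, 1:] ^ N * [:1, -1:]) k"

lemma binom_diff_eq:
  "binom_diff N k = real (N choose k) - (if k = 0 then 0 else real (N choose (k - 1)))"
  unfolding binom_diff_def coeff_mult_1_minus_X by (simp add: coeff_linear_poly_power')

lemma binom_diff_antisym:
  assumes "k + k' = N + 1"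
  shows "binom_diff N k' = - binom_diff N k"
proof -
  consider "k = 0 \<or> k' = 0" | "k \<ge> 1" "k' \<ge> 1" by linarith
  then show ?thesis
  proof cases
    case 1
    then show ?thesis using assms by (auto simp: binom_diff_eq)
  next
    case 2
    have "k' = N - (k - 1)" "k' - 1 = N - k" "k \<le> N" using 2 assms by arith+
    then have "N choose k' = N choose (k - 1)" "N choose (k' - 1) = N choose k"
      using binomial_symmetric[of "k - 1" N] binomial_symmetric[of k N] by simp_all
    then show ?thesis using 2 by (simp add: binom_diff_eq)
  qed
qed

lemma binom_diff_nonneg:
  assumes "2 * k \<le> N + 1"
  shows "binom_diff N k \<ge> 0"
proof (cases k)
  case (Suc j)
  have "Suc j * (N choose j) \<le> (N - j) * (N choose j)"
    using assms Suc by (intro mult_right_mono) auto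
  also have "\<dots> = Suc j * (N choose Suc j)"
    using binomial_absorption[of j N] binomial_absorb_comp[of N j] by simp
  finally have "N choose j \<le> N choose Suc j" by (metis mult_le_cancel1 zero_less_Suc)
  then show ?thesis using Suc by (simp add: binom_diff_eq)
qed (simp add: binom_diff_eq)

lemma choose_mult_choose_pred_le:
  assumes "b \<le> a" "a \<le> n"
  shows "(n choose b) * ((n - 1) choose a) \<le> (n choose a) * ((n - 1) choose b)"
proof (cases "n = 0")
  case False
  have "n * ((n choose b) * ((n - 1) choose a)) = (n - a) * ((n choose b) * (n choose a))"
    using binomial_absorb_comp[of n a] by (simp add: ac_simps)
  also have "\<dots> \<le> (n - b) * ((n choose b) * (n choose a))"
    using assms by (intro mult_right_mono) auto
  also have "\<dots> = n * ((n choose a) * ((n - 1) choose b))"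
    using binomial_absorb_comp[of n b] by (simp add: ac_simps)
  finally show ?thesis using False by simp
qed (use assms in simp)

definition gen_poly :: "nat \<Rightarrow> real \<Rightarrow> real poly" where
  "gen_poly n t = [:1, t:] ^ n * [:t, 1:] ^ (n - 1) * [:1, -1:]"

lemma poly_f_poly:
  "poly (f_poly n) t = (\<Sum>j\<le>n - 1. real ((n - 1) choose j) *
     (real (n choose (j + 1)) * t ^ (2 * j + 1) - real (n choose j) * t ^ (2 * j)))"
  by (simp add: f_poly_def poly_sum poly_monom atLeast0AtMost algebra_simps)

lemma coeff_gen_poly_eq_poly_f_poly:
  assumes "n \<ge> 1"
  shows "coeff (gen_poly n t) n = poly (f_poly n) t"
proof -
  obtain m where n: "n = Suc m" using assms by (cases n) auto
  define c where "c k = coeff ([:1, t:] ^ n * [:t, 1:] ^ m) k" for k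
  have "c n = (\<Sum>i\<le>n. coeff ([:1, t:] ^ n) i * coeff ([:t, 1:] ^ m) (n - i))"
    by (simp add: c_def coeff_mult)
  also have "\<dots> = (\<Sum>j\<le>m. coeff ([:1, t:] ^ n) (Suc j) * coeff ([:t, 1:] ^ m) (m - j))"
    unfolding n sum.atMost_Suc_shift by (simp add: coeff_linear_poly_power')
  also have "\<dots> = (\<Sum>j\<le>m. real (m choose j) * real (n choose (j + 1)) * t ^ (2 * j + 1))"
    by (intro sum.cong refl)
       (simp add: coeff_linear_poly_power_reflect, simp add: coeff_linear_poly_power' power_add mult_2)
  finally have cn: "c n = \<dots>" .
  have "c m = (\<Sum>i\<le>m. coeff ([:1, t:] ^ n) i * coeff ([:t, 1:] ^ m) (m - i))"
    by (simp add: c_def coeff_mult)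
  also have "\<dots> = (\<Sum>j\<le>m. real (m choose j) * real (n choose j) * t ^ (2 * j))"
    by (intro sum.cong refl)
       (simp add: coeff_linear_poly_power_reflect, simp add: coeff_linear_poly_power' power_add mult_2)
  finally have cm: "c m = \<dots>" .
  have "coeff (gen_poly n t) n = c n - c m"
    unfolding gen_poly_def c_def coeff_mult_1_minus_X by (simp add: n)
  also have "\<dots> = poly (f_poly n) t"
    unfolding cn cm poly_f_poly using n by (simp add: sum_subtractf algebra_simps)
  finally show ?thesis .
qed

text \<open>
  The coefficient of (t-1)^(a+b) in the expansion of coeff (gen_poly n t) n: after choosing
  a factors (t-1)X and b factors t-1, what remains is (1+X)^(2n-1-a-b) (1-X), read at X^(n-a).
\<close>
definition shift_coeff :: "nat \<Rightarrow> nat \<Rightarrow> nat \<Rightarrow> real" where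
  "shift_coeff n a b =
     real (n choose a) * real ((n - 1) choose b) * binom_diff (2 * n - 1 - a - b) (n - a)"

lemma shift_coeff_sym_nonneg:
  assumes "n \<ge> 1" "a \<le> n" "b \<le> n"
  shows "shift_coeff n a b + shift_coeff n b a \<ge> 0"
  using assms(2,3)
proof (induction a b rule: linorder_wlog)
  case (le b a)
  show ?case
  proof (cases "a = n \<and> b = n")
    case True
    then show ?thesis using assms(1) by (simp add: shift_coeff_def binomial_eq_0)
  next
    case False
    define N where "N = 2 * n - 1 - a - b"
    have "(n - a) + (n - b) = N + 1" "2 * (n - a) \<le> N + 1"
      using False le assms unfolding N_def by auto
    then have anti: "binom_diff N (n - b) = - binom_diff N (n - a)"
      and nonneg: "binom_diff N (n - a) \<ge> 0"
      by (simp_all add: binom_diff_antisym binom_diff_nonneg)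
    have "real (n choose a) * real ((n - 1) choose b) - real (n choose b) * real ((n - 1) choose a) \<ge> 0"
      using choose_mult_choose_pred_le[of b a n] le by (simp flip: of_nat_mult)
    moreover have "shift_coeff n a b + shift_coeff n b a =
      (real (n choose a) * real ((n - 1) choose b) - real (n choose b) * real ((n - 1) choose a))
        * binom_diff N (n - a)"
      unfolding shift_coeff_def N_def[symmetric] diff_commute[of _ b a] anti
      by (simp add: algebra_simps)
    ultimately have "shift_coeff n a b + shift_coeff n b a \<ge> 0" using nonneg by simp
    then show ?thesis by (simp add: add.commute)
  qed
next
  case (sym a b)
  then show ?case by (simp add: add.commute)
qed

lemma coeff_gen_poly_eq_shift_sum:
  assumes "n \<ge> 1"
  shows "coeff (gen_poly n t) n = (\<Sum>a\<le>n. \<Sum>b\<le>n. shift_coeff n a b * (t - 1) ^ (a + b))"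
proof -
  obtain m where n: "n = Suc m" using assms by (cases n) auto
  define s where "s = t - 1"
  define w where "w = [:1, 1::real:]"
  define A where "A a = of_nat (n choose a) * [:0, s:] ^ a * w ^ (n - a)" for a
  define B where "B b = of_nat (m choose b) * [:s:] ^ b * w ^ (m - b)" for b
  have "[:1, t:] = [:0, s:] + w" "[:t, 1:] = [:s:] + w" unfolding s_def w_def by simp_all
  then have "gen_poly n t = ([:0, s:] + w) ^ n * ([:s:] + w) ^ m * [:1, -1:]"
    unfolding gen_poly_def using n by simp
  also have "\<dots> = (\<Sum>a\<le>n. A a) * (\<Sum>b\<le>m. B b) * [:1, -1:]"
    unfolding binomial_ring A_def B_def ..
  also have "\<dots> = (\<Sum>a\<le>n. \<Sum>b\<le>m. A a * B b * [:1, -1:])"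
    by (simp only: sum_distrib_left sum_distrib_right sum.swap[of _ "{..m}"])
  finally have "coeff (gen_poly n t) n = (\<Sum>a\<le>n. \<Sum>b\<le>m. coeff (A a * B b * [:1, -1:]) n)"
    by (simp add: coeff_sum)
  also have "\<dots> = (\<Sum>a\<le>n. \<Sum>b\<le>m. shift_coeff n a b * s ^ (a + b))"
  proof (intro sum.cong refl)
    fix a b assume a: "a \<in> {..n}" and b: "b \<in> {..m}"
    have "[:0, s:] = monom s 1" by (simp add: monom_Suc monom_0)
    then have "[:0, s:] ^ a = monom (s ^ a) a" by (simp add: monom_power)
    moreover have "w ^ (n - a) * w ^ (m - b) = w ^ (2 * n - 1 - a - b)"
      using a b n by (simp add: mult_2 flip: power_add)
    ultimately have "A a * B b * [:1, -1:] = smult (real (n choose a) * real (m choose b) * s ^ b)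
        (monom (s ^ a) a * (w ^ (2 * n - 1 - a - b) * [:1, -1:]))"
      unfolding A_def B_def poly_const_pow of_nat_poly by (simp add: mult_ac)
    then show "coeff (A a * B b * [:1, -1:]) n = shift_coeff n a b * s ^ (a + b)"
      using a n by (simp add: coeff_monom_mult shift_coeff_def binom_diff_def w_def power_add mult_ac)
  qed
  also have "\<dots> = (\<Sum>a\<le>n. \<Sum>b\<le>n. shift_coeff n a b * s ^ (a + b))"
    using n by (simp add: shift_coeff_def binomial_eq_0)
  finally show ?thesis unfolding s_def .
qed

lemma sum_sum_symmetrize:
  fixes g w :: "'a \<Rightarrow> 'a \<Rightarrow> real"
  assumes "\<And>a b. w a b = w b a"
  shows "(\<Sum>a\<in>A. \<Sum>b\<in>A. g a b * w a b) = (\<Sum>a\<in>A. \<Sum>b\<in>A. (g a b + g b a) / 2 * w a b)"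
proof -
  have "(\<Sum>a\<in>A. \<Sum>b\<in>A. g b a * w a b) = (\<Sum>a\<in>A. \<Sum>b\<in>A. g a b * w a b)"
    using sum.swap[of "\<lambda>a b. g b a * w a b" A A] assms by simp
  then show ?thesis
    by (simp add: add_divide_distrib distrib_right sum.distrib flip: sum_divide_distrib)
qed

lemma coeff_shifted_f_poly_nonneg:
  assumes "n \<ge> 1"
  shows "coeff (pcompose (f_poly n) [:1, 1:]) k \<ge> 0"
proof -
  define H where "H a b = (shift_coeff n a b + shift_coeff n b a) / 2" for a b
  have "poly (f_poly n) (s + 1) = (\<Sum>a\<le>n. \<Sum>b\<le>n. H a b * s ^ (a + b))" for s
    using coeff_gen_poly_eq_poly_f_poly[OF assms, of "s + 1"]
      coeff_gen_poly_eq_shift_sum[OF assms, of "s + 1"]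
      sum_sum_symmetrize[of "\<lambda>a b. s ^ (a + b)" "shift_coeff n" "{..n}"]
    by (simp add: H_def add.commute)
  then have "pcompose (f_poly n) [:1, 1:] = (\<Sum>a\<le>n. \<Sum>b\<le>n. smult (H a b) (monom 1 (a + b)))"
    by (intro poly_ext) (simp add: poly_pcompose poly_sum poly_monom add.commute)
  then have "coeff (pcompose (f_poly n) [:1, 1:]) k =
      (\<Sum>a\<le>n. \<Sum>b\<le>n. H a b * (if a + b = k then 1 else 0))"
    by (simp add: coeff_sum)
  also have "\<dots> \<ge> 0"
    using shift_coeff_sym_nonneg[OF assms] by (intro sum_nonneg) (simp add: H_def)
  finally show ?thesis .
qed

theorem mainTheorem6:
  fixes n i :: nat and t :: real
  assumes "n \<ge> 1" and "t \<ge> 1" and "i \<le> 2*n - 1"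
  shows "poly ((pderiv ^^ i) (f_poly n)) t \<ge> 0"
  using coeff_shifted_f_poly_nonneg[OF assms(1)] assms(2)
  by (rule higher_pderiv_nonneg_of_shifted_coeff_nonneg)

end
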